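(* There exist absolute constants $c_1,c_2>0$ such that for every $\gamma\ge1$ there exists a model class $\mathcal M\subseteq\mathcal M^+$ such that for all $\varepsilon\in(0,1)$, $$\mathrm{dec}^{\mathrm c}_{\mathrm r,\varepsilon}(\mathcal M)=\sup_{\bar M\in\mathrm{co}(\mathcal M)}\mathrm{dec}^{\mathrm c}_{\mathrm r,\varepsilon}(\mathcal M\cup\{\bar M\},\bar M)\le c_1\varepsilon^2\gamma^{1/2}$$ (in particular $\mathrm{dec}^{\mathrm c}_{\mathrm r,\varepsilon}(\mathcal M)\le c_1\varepsilon$ for $\varepsilon\le\gamma^{-1/2}$), yet there exists $\bar M\in\mathcal M$ with $\mathrm{dec}^{\mathrm o}_{\mathrm r,\gamma}(\mathcal M,\bar M)\ge c_2\gamma^{-1/2}$.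
   Context: Models are kernels $M:\Pi\to\Delta([0,1]\times\mathcal O)$ (for some decision space $\Pi$ and observation space $\mathcal O$; rewards in $[0,1]$); $\mathcal M^+$ is the set of all models. $f^M(\pi)=\mathbb E_{(r,o)\sim M(\pi)}[r]$, $\pi_M\in\arg\max f^M$, $g^M(\pi)=f^M(\pi_M)-f^M(\pi)$; $D^2_H$ is squared Hellinger distance; $\mathrm{co}(\mathcal M)$ is the set of mixtures of models in $\mathcal M$. Constrained regret DEC $\mathrm{dec}^{\mathrm c}_{\mathrm r,\varepsilon}(\mathcal M',\bar M)=\inf_{p\in\Delta(\Pi)}\sup_{M\in\mathcal M'}\{\mathbb E_{\pi\sim p}[g^M(\pi)]:\mathbb E_{\pi\sim p}[D^2_H(M(\pi),\bar M(\pi))]\le\varepsilon^2\}$ (value $0$ if empty); offset regret DEC $\mathrm{dec}^{\mathrm o}_{\mathrm r,\gamma}(\mathcal M,\bar M)=\inf_{p}\sup_{M\in\mathcal M}\mathbb E_{\pi\sim p}[g^M(\pi)-\gamma D^2_H(M(\pi),\bar M(\pi))]$. *)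

theory Defs
  imports "HOL-Probability.Probability"
begin

text \<open>A model maps decisions to discrete distributions on
  reward x observation; rewards must lie in [0,1] (for decisions in Dec).\<close>

type_synonym model = "nat \<Rightarrow> (real \<times> nat) pmf"

definition models_all :: "nat set \<Rightarrow> model set" where
  "models_all Dec = {M. \<forall>\<pi>\<in>Dec. fst ` set_pmf (M \<pi>) \<subseteq> {0..1}}"

definition fval :: "model \<Rightarrow> nat \<Rightarrow> real" where
  "fval M \<pi> = measure_pmf.expectation (M \<pi>) fst"

definition gval :: "nat set \<Rightarrow> model \<Rightarrow> nat \<Rightarrow> real" where
  "gval Dec M \<pi> = (SUP \<pi>'\<in>Dec. fval M \<pi>') - fval M \<pi>"

text \<open>Squared Hellinger distance (without the factor 1/2).\<close>
definition hellinger_sq :: "'a pmf \<Rightarrow> 'a pmf \<Rightarrow> real" where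
  "hellinger_sq P Q = infsum (\<lambda>x. (sqrt (pmf P x) - sqrt (pmf Q x))\<^sup>2) UNIV"

definition dists_on :: "nat set \<Rightarrow> nat pmf set" where
  "dists_on Dec = {p. set_pmf p \<subseteq> Dec}"

text \<open>Constrained regret DEC (value 0 if the constraint set is empty).\<close>
definition dec_c :: "nat set \<Rightarrow> model set \<Rightarrow> model \<Rightarrow> real \<Rightarrow> real" where
  "dec_c Dec MM Mbar \<epsilon> =
     (INF p\<in>dists_on Dec.
        (let S = {measure_pmf.expectation p (gval Dec M) | M.
                    M \<in> MM \<and> measure_pmf.expectation p (\<lambda>\<pi>. hellinger_sq (M \<pi>) (Mbar \<pi>)) \<le> \<epsilon>\<^sup>2}
         in if S = {} then 0 else Sup S))"

definition dec_o :: "nat set \<Rightarrow> model set \<Rightarrow> model \<Rightarrow> real \<Rightarrow> real" where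
  "dec_o Dec MM Mbar \<gamma> =
     (INF p\<in>dists_on Dec. SUP M\<in>MM.
        measure_pmf.expectation p (\<lambda>\<pi>. gval Dec M \<pi> - \<gamma> * hellinger_sq (M \<pi>) (Mbar \<pi>)))"

text \<open>Mixtures of models in MM (mixing distributions with countable support).\<close>
definition co_models :: "model set \<Rightarrow> model set" where
  "co_models MM = {Mbar. \<exists>\<mu> :: model pmf. set_pmf \<mu> \<subseteq> MM \<and>
                          Mbar = (\<lambda>\<pi>. bind_pmf \<mu> (\<lambda>M. M \<pi>))}"

definition dec_c_glob :: "nat set \<Rightarrow> model set \<Rightarrow> real \<Rightarrow> real" where
  "dec_c_glob Dec MM \<epsilon> = (SUP Mbar\<in>co_models MM. dec_c Dec (MM \<union> {Mbar}) Mbar \<epsilon>)"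

end

theory Submission
  imports Defs
begin

text \<open>
  Take N \<approx> 16\<gamma> arms and one extra decision 0 of reward 0 which reveals, with probability
  \<gamma>^(-1/2), the index of a hidden good arm b; arm \<pi> pays 1 if \<pi> = b and 1/2 otherwise,
  and b = 0 stands for the null model without a good arm.

  Offset DEC at the null model: if p reveals with probability at least 1/(16\<surd>\<gamma>), the null
  model itself has regret at least 1/(32\<surd>\<gamma>). Otherwise some arm b has p(b) \<le> 1/N, and the
  model with good arm b has regret about 1/2 under p, while its Hellinger penalty
  \<gamma>\<cdot>(2\<gamma>^(-1/2) p(0) + 2 p(b)) is at most 1/8 + 1/8.

  Constrained DEC at a mixture with arm weights w: reveal with probability
  q = min(16\<epsilon>^2\<surd>\<gamma>, 1) and otherwise play the arm a of largest weight. Models with no regret at a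
  lose at most q. Any other model has a good arm b \<noteq> a, so w(b) \<le> 1/2 and its revealing
  distribution is at squared Hellinger distance more than \<gamma>^(-1/2)/16 from the mixture's;
  the constraint q\<cdot>D^2 \<le> \<epsilon>^2 then forces q = 1 \<le> 16\<epsilon>^2\<surd>\<gamma>.
\<close>

lemma hellinger_sq_nonneg: "0 \<le> hellinger_sq P Q"
  unfolding hellinger_sq_def by (rule infsum_nonneg) simp

lemma hellinger_sq_self [simp]: "hellinger_sq P P = 0"
  unfolding hellinger_sq_def by simp

lemma hellinger_sq_finite_support:
  assumes "finite A" "set_pmf P \<subseteq> A" "set_pmf Q \<subseteq> A"
  shows "hellinger_sq P Q = (\<Sum>x\<in>A. (sqrt (pmf P x) - sqrt (pmf Q x))\<^sup>2)"
proof -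
  have "pmf P x = 0" "pmf Q x = 0" if "x \<notin> A" for x
    using assms(2,3) that by (auto simp: pmf_eq_0_set_pmf)
  then have "hellinger_sq P Q = infsum (\<lambda>x. (sqrt (pmf P x) - sqrt (pmf Q x))\<^sup>2) A"
    unfolding hellinger_sq_def by (intro infsum_cong_neutral) auto
  then show ?thesis
    using assms(1) by simp
qed

lemma hellinger_sq_ge_point:
  assumes "finite A" "set_pmf P \<subseteq> A" "set_pmf Q \<subseteq> A"
  shows "(sqrt (pmf P x) - sqrt (pmf Q x))\<^sup>2 \<le> hellinger_sq P Q"
proof (cases "x \<in> A")
  case True
  then show ?thesis
    unfolding hellinger_sq_finite_support[OF assms] using assms(1) by (intro member_le_sum) auto
next
  case False
  then have "pmf P x = 0" "pmf Q x = 0"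
    using assms(2,3) by (auto simp: pmf_eq_0_set_pmf)
  then show ?thesis
    using hellinger_sq_nonneg[of P Q] by simp
qed

lemma hellinger_sq_return_pmf:
  "hellinger_sq (return_pmf x) (return_pmf y) = (if x = y then 0 else 2)"
  by (subst hellinger_sq_finite_support[of "{x, y}"]) (auto simp: indicator_def)

lemma pmf_le_inverse_card:
  assumes "finite A" "A \<noteq> {}"
  shows "\<exists>a\<in>A. pmf p a \<le> 1 / card A"
proof (rule ccontr)
  assume "\<not> ?thesis"
  then have "(\<Sum>a\<in>A. 1 / card A) < (\<Sum>a\<in>A. pmf p a)"
    using assms by (intro sum_strict_mono) auto
  also have "\<dots> = measure_pmf.prob p A"
    using assms(1) by (simp add: measure_measure_pmf_finite)
  also have "\<dots> \<le> 1"
    by simp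
  finally show False
    using assms by simp
qed

lemma gval_nonneg: "finite D \<Longrightarrow> \<pi> \<in> D \<Longrightarrow> 0 \<le> gval D M \<pi>"
  unfolding gval_def by (auto intro!: cSUP_upper)

lemma dec_c_le:
  assumes "finite D" "finite MM" "p \<in> dists_on D" "0 \<le> B"
    and "\<And>M. M \<in> MM \<Longrightarrow> measure_pmf.expectation p (\<lambda>\<pi>. hellinger_sq (M \<pi>) (Mbar \<pi>)) \<le> \<epsilon>^2
           \<Longrightarrow> measure_pmf.expectation p (gval D M) \<le> B"
  shows "dec_c D MM Mbar \<epsilon> \<le> B"
proof -
  define S where "S p' = {measure_pmf.expectation p' (gval D M) | M.
    M \<in> MM \<and> measure_pmf.expectation p' (\<lambda>\<pi>. hellinger_sq (M \<pi>) (Mbar \<pi>)) \<le> \<epsilon>^2}" for p'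
  define V where "V p' = (if S p' = {} then 0 else Sup (S p'))" for p'
  have finite_S: "finite (S p')" for p'
    using assms(2) unfolding S_def by (auto intro: finite_subset[of _ "(\<lambda>M. _ M) ` MM"])
  have S_nonneg: "\<forall>x\<in>S p'. 0 \<le> x" if "p' \<in> dists_on D" for p'
    using that assms(1) unfolding S_def dists_on_def
    by (auto intro!: integral_nonneg_AE gval_nonneg simp: AE_measure_pmf_iff)
  have V_nonneg: "0 \<le> V p'" if "p' \<in> dists_on D" for p'
  proof -
    have "0 \<le> Sup (S p')" if "x \<in> S p'" for x
      using that \<open>p' \<in> dists_on D\<close> finite_S S_nonneg by (meson le_cSup_finite order_trans)
    then show ?thesis
      unfolding V_def by auto
  qed
  have "dec_c D MM Mbar \<epsilon> = (INF p'\<in>dists_on D. V p')"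
    unfolding dec_c_def V_def S_def Let_def ..
  also have "\<dots> \<le> V p"
    using V_nonneg assms(3) by (intro cINF_lower) (auto simp: bdd_below_def)
  also have "\<dots> \<le> B"
    using assms(4,5) unfolding V_def S_def by (auto intro!: cSup_least)
  finally show ?thesis .
qed

lemma dec_o_ge:
  assumes "finite MM" "dists_on D \<noteq> {}"
    and "\<And>p. p \<in> dists_on D \<Longrightarrow> \<exists>M\<in>MM.
           c \<le> measure_pmf.expectation p (\<lambda>\<pi>. gval D M \<pi> - \<gamma> * hellinger_sq (M \<pi>) (Mbar \<pi>))"
  shows "c \<le> dec_o D MM Mbar \<gamma>"
  unfolding dec_o_def
proof (rule cINF_greatest[OF assms(2)])
  fix p assume "p \<in> dists_on D"
  then obtain M where "M \<in> MM"
    "c \<le> measure_pmf.expectation p (\<lambda>\<pi>. gval D M \<pi> - \<gamma> * hellinger_sq (M \<pi>) (Mbar \<pi>))"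
    using assms(3) by blast
  then show "c \<le> (SUP M\<in>MM. measure_pmf.expectation p (\<lambda>\<pi>. gval D M \<pi> - \<gamma> * hellinger_sq (M \<pi>) (Mbar \<pi>)))"
    using assms(1) by (intro cSUP_upper2) auto
qed

lemma dec_c_glob_le:
  assumes "MM \<noteq> {}"
    and "\<And>\<mu>. set_pmf \<mu> \<subseteq> MM \<Longrightarrow>
           dec_c D (MM \<union> {\<lambda>\<pi>. bind_pmf \<mu> (\<lambda>M. M \<pi>)}) (\<lambda>\<pi>. bind_pmf \<mu> (\<lambda>M. M \<pi>)) \<epsilon> \<le> B"
  shows "dec_c_glob D MM \<epsilon> \<le> B"
  unfolding dec_c_glob_def
proof (rule cSUP_least)
  obtain M where "M \<in> MM"
    using assms(1) by blast
  then have "M \<in> co_models MM"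
    unfolding co_models_def by (auto intro!: exI[of _ "return_pmf M"] simp: bind_return_pmf)
  then show "co_models MM \<noteq> {}"
    by blast
qed (use assms(2) in \<open>auto simp: co_models_def\<close>)

lemma one_minus_sqrt_one_minus_sq_le:
  fixes t :: real
  assumes "0 \<le> t" "t \<le> 1"
  shows "(1 - sqrt (1 - t))\<^sup>2 \<le> t"
proof -
  define x where "x = sqrt (1 - t)"
  have "0 \<le> x" "x \<le> 1" "x\<^sup>2 = 1 - t"
    using assms by (auto simp: x_def)
  moreover have "x * x \<le> x"
    using \<open>0 \<le> x\<close> \<open>x \<le> 1\<close> by (simp add: mult_left_le)
  ultimately show ?thesis
    unfolding x_def[symmetric] by (simp add: power2_eq_square algebra_simps)
qed

locale hidden_arm_instance =
  fixes \<gamma> :: real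
  assumes gamma_ge_1: "1 \<le> \<gamma>"
begin

definition reveal_prob :: real where
  "reveal_prob = 1 / sqrt \<gamma>"

definition num_arms :: nat where
  "num_arms = nat \<lceil>16 * \<gamma>\<rceil>"

definition decisions :: "nat set" where
  "decisions = {0..num_arms}"

definition hidden_arm_model :: "nat \<Rightarrow> model" where
  "hidden_arm_model b \<pi> =
     (if \<pi> = 0 then map_pmf (\<lambda>revealed. (0, if revealed then b else 0)) (bernoulli_pmf reveal_prob)
      else return_pmf (if \<pi> = b then 1 else 1/2, 0))"

definition model_class :: "model set" where
  "model_class = hidden_arm_model ` decisions"

lemma reveal_prob_pos: "0 < reveal_prob" and reveal_prob_le_1: "reveal_prob \<le> 1"
  using gamma_ge_1 by (auto simp: reveal_prob_def)

lemma gamma_mult_reveal_prob: "\<gamma> * reveal_prob = sqrt \<gamma>"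
  using gamma_ge_1 by (simp add: reveal_prob_def real_div_sqrt)

lemma num_arms_ge: "16 * \<gamma> \<le> num_arms" and num_arms_pos: "1 \<le> num_arms"
  using gamma_ge_1 unfolding num_arms_def by linarith+

lemma finite_decisions [simp]: "finite decisions"
  and zero_in_decisions [simp]: "0 \<in> decisions"
  and decisions_nonempty: "decisions \<noteq> {}"
  by (auto simp: decisions_def)

lemma fval_hidden_arm_model:
  "fval (hidden_arm_model b) \<pi> = (if \<pi> = 0 then 0 else if \<pi> = b then 1 else 1/2)"
  unfolding fval_def hidden_arm_model_def by simp

lemma gval_hidden_arm_model:
  assumes "b \<in> decisions"
  shows "gval decisions (hidden_arm_model b) \<pi> =
    (if b = 0 then 1/2 else 1) - (if \<pi> = 0 then 0 else if \<pi> = b then 1 else 1/2)"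
proof -
  have "(SUP \<pi>\<in>decisions. fval (hidden_arm_model b) \<pi>) = (if b = 0 then 1/2 else 1)"
    unfolding fval_hidden_arm_model using assms num_arms_pos
    by (intro cSup_eq_maximum) (auto simp: decisions_def image_iff)
  then show ?thesis
    unfolding gval_def fval_hidden_arm_model by simp
qed

lemma inj_on_hidden_arm_model: "inj_on hidden_arm_model decisions"
proof (rule inj_onI)
  fix b b' assume "hidden_arm_model b = hidden_arm_model b'"
  then have "fval (hidden_arm_model b) \<pi> = fval (hidden_arm_model b') \<pi>" for \<pi>
    by simp
  from this[of b] this[of b'] show "b = b'"
    unfolding fval_hidden_arm_model by (auto split: if_splits)
qed

lemma finite_model_class: "finite model_class"
  by (simp add: model_class_def)

lemma model_class_subset: "model_class \<subseteq> models_all decisions"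
  unfolding model_class_def models_all_def hidden_arm_model_def by (auto split: if_splits)

lemma null_model_reveal: "hidden_arm_model 0 0 = return_pmf (0, 0)"
  by (simp add: hidden_arm_model_def map_pmf_const)

lemma pmf_hidden_arm_model_reveal:
  assumes "b \<noteq> 0"
  shows "pmf (hidden_arm_model b' 0) (0, b) = (if b' = b then reveal_prob else 0)"
    and "pmf (hidden_arm_model b 0) (0, 0) = 1 - reveal_prob"
proof -
  have "{x. x} = {True}" "{x. \<not> x} = {False}"
    by auto
  then show "pmf (hidden_arm_model b' 0) (0, b) = (if b' = b then reveal_prob else 0)"
    and "pmf (hidden_arm_model b 0) (0, 0) = 1 - reveal_prob"
    using assms reveal_prob_pos reveal_prob_le_1
    by (auto simp: hidden_arm_model_def pmf_map vimage_def measure_pmf_single)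
qed

lemma hellinger_sq_reveal_le:
  "hellinger_sq (hidden_arm_model b 0) (hidden_arm_model 0 0) \<le> 2 * reveal_prob"
proof (cases "b = 0")
  case True
  then show ?thesis
    using reveal_prob_pos by simp
next
  case False
  have "hellinger_sq (hidden_arm_model b 0) (hidden_arm_model 0 0) =
    (\<Sum>z\<in>{(0, 0), (0, b)}. (sqrt (pmf (hidden_arm_model b 0) z) - sqrt (pmf (hidden_arm_model 0 0) z))\<^sup>2)"
    by (rule hellinger_sq_finite_support) (auto simp: hidden_arm_model_def)
  also have "\<dots> = (1 - sqrt (1 - reveal_prob))\<^sup>2 + reveal_prob"
    using False reveal_prob_pos
    by (simp add: pmf_hidden_arm_model_reveal null_model_reveal power2_commute)
  also have "\<dots> \<le> 2 * reveal_prob"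
    using one_minus_sqrt_one_minus_sq_le reveal_prob_pos reveal_prob_le_1 by force
  finally show ?thesis .
qed

lemma hellinger_sq_arm:
  "\<pi> \<noteq> 0 \<Longrightarrow> hellinger_sq (hidden_arm_model b \<pi>) (hidden_arm_model 0 \<pi>) = (if \<pi> = b then 2 else 0)"
  by (simp add: hidden_arm_model_def hellinger_sq_return_pmf)

lemma expectation_on_decisions:
  "set_pmf p \<subseteq> decisions \<Longrightarrow> measure_pmf.expectation p F = (\<Sum>a\<in>decisions. F a * pmf p a)"
  by (rule integral_measure_pmf_real) auto

lemma sum_pmf_decisions: "set_pmf p \<subseteq> decisions \<Longrightarrow> (\<Sum>a\<in>decisions. pmf p a) = 1"
  by (rule sum_pmf_eq_1) auto

lemma offset_value_null_model:
  assumes "set_pmf p \<subseteq> decisions"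
  shows "measure_pmf.expectation p (\<lambda>\<pi>. gval decisions (hidden_arm_model 0) \<pi>
           - \<gamma> * hellinger_sq (hidden_arm_model 0 \<pi>) (hidden_arm_model 0 \<pi>)) = pmf p 0 / 2"
  unfolding expectation_on_decisions[OF assms]
  by (simp add: gval_hidden_arm_model if_distrib if_distribR sum.If_cases cong: if_cong)

lemma offset_value_hidden_arm_model_ge:
  assumes p: "set_pmf p \<subseteq> decisions" and b: "b \<in> decisions" "b \<noteq> 0"
  shows "1/2 + (1/2 - 2 * sqrt \<gamma>) * pmf p 0 - (2 * \<gamma> + 1/2) * pmf p b \<le>
    measure_pmf.expectation p (\<lambda>\<pi>. gval decisions (hidden_arm_model b) \<pi>
      - \<gamma> * hellinger_sq (hidden_arm_model b \<pi>) (hidden_arm_model 0 \<pi>))"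
    (is "_ \<le> measure_pmf.expectation p ?F")
proof -
  define h where
    "h a = 1/2 + (if a = 0 then 1/2 - 2 * sqrt \<gamma> else 0) - (if a = b then 2 * \<gamma> + 1/2 else 0)" for a
  have "h a \<le> ?F a" for a
  proof (cases "a = 0")
    case True
    have "\<gamma> * hellinger_sq (hidden_arm_model b 0) (hidden_arm_model 0 0) \<le> \<gamma> * (2 * reveal_prob)"
      using hellinger_sq_reveal_le gamma_ge_1 by (intro mult_left_mono) auto
    also have "\<dots> = 2 * sqrt \<gamma>"
      using gamma_mult_reveal_prob by simp
    finally show ?thesis
      using True b by (simp add: h_def gval_hidden_arm_model)
  next
    case False
    then show ?thesis
      using b by (simp add: h_def gval_hidden_arm_model hellinger_sq_arm)
  qed
  then have "(\<Sum>a\<in>decisions. h a * pmf p a) \<le> measure_pmf.expectation p ?F"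
    unfolding expectation_on_decisions[OF p] by (intro sum_mono mult_right_mono) auto
  moreover have "h a * pmf p a = pmf p a / 2 + (if a = 0 then (1/2 - 2 * sqrt \<gamma>) * pmf p 0 else 0)
      - (if a = b then (2 * \<gamma> + 1/2) * pmf p b else 0)" for a
    using b by (simp add: h_def algebra_simps)
  then have "(\<Sum>a\<in>decisions. h a * pmf p a) =
      (\<Sum>a\<in>decisions. pmf p a) / 2 + (1/2 - 2 * sqrt \<gamma>) * pmf p 0 - (2 * \<gamma> + 1/2) * pmf p b"
    using b by (simp add: sum.distrib sum_subtractf sum_divide_distrib)
  ultimately show ?thesis
    using sum_pmf_decisions[OF p] by simp
qed

lemma offset_lower_bound:
  assumes p: "set_pmf p \<subseteq> decisions"
  shows "\<exists>M\<in>model_class. 1 / (32 * sqrt \<gamma>) \<le> measure_pmf.expectation p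
           (\<lambda>\<pi>. gval decisions M \<pi> - \<gamma> * hellinger_sq (M \<pi>) (hidden_arm_model 0 \<pi>))"
proof (cases "1 / (16 * sqrt \<gamma>) \<le> pmf p 0")
  case True
  show ?thesis
  proof
    show "hidden_arm_model 0 \<in> model_class"
      by (simp add: model_class_def)
    show "1 / (32 * sqrt \<gamma>) \<le> measure_pmf.expectation p (\<lambda>\<pi>. gval decisions (hidden_arm_model 0) \<pi>
        - \<gamma> * hellinger_sq (hidden_arm_model 0 \<pi>) (hidden_arm_model 0 \<pi>))"
      unfolding offset_value_null_model[OF p] using True by simp
  qed
next
  case False
  obtain b where b: "b \<in> {1..num_arms}" "pmf p b \<le> 1 / num_arms"
    using pmf_le_inverse_card[of "{1..num_arms}" p] num_arms_pos by auto
  have "pmf p b \<le> 1 / (16 * \<gamma>)"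
  proof -
    have "1 / real num_arms \<le> 1 / (16 * \<gamma>)"
      using num_arms_ge gamma_ge_1 by (intro divide_left_mono) auto
    then show ?thesis
      using b(2) by linarith
  qed
  then have "(2 * \<gamma> + 1/2) * pmf p b \<le> (2 * \<gamma> + 1/2) * (1 / (16 * \<gamma>))"
    using gamma_ge_1 by (intro mult_left_mono) auto
  also have "\<dots> \<le> 5/32"
    using gamma_ge_1 by (simp add: field_simps)
  finally have arm_penalty: "(2 * \<gamma> + 1/2) * pmf p b \<le> 5/32" .
  have reveal_penalty: "2 * sqrt \<gamma> * pmf p 0 \<le> 1/8"
    using False gamma_ge_1 by (simp add: field_simps)
  have "1 / (32 * sqrt \<gamma>) \<le> 1/32"
    using gamma_ge_1 by (simp add: field_simps)
  also have "\<dots> \<le> 1/2 + (1/2 - 2 * sqrt \<gamma>) * pmf p 0 - (2 * \<gamma> + 1/2) * pmf p b"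
    unfolding left_diff_distrib using arm_penalty reveal_penalty pmf_nonneg[of p 0] by linarith
  also have "\<dots> \<le> measure_pmf.expectation p (\<lambda>\<pi>. gval decisions (hidden_arm_model b) \<pi>
      - \<gamma> * hellinger_sq (hidden_arm_model b \<pi>) (hidden_arm_model 0 \<pi>))"
    using b by (intro offset_value_hidden_arm_model_ge p) (auto simp: decisions_def)
  finally show ?thesis
    using b by (auto simp: model_class_def decisions_def)
qed

end

locale hidden_arm_mixture = hidden_arm_instance +
  fixes \<mu> :: "model pmf"
  assumes mixing_support: "set_pmf \<mu> \<subseteq> model_class"
begin

definition weight :: "nat \<Rightarrow> real" where
  "weight b = pmf \<mu> (hidden_arm_model b)"

definition mixture :: model where
  "mixture \<pi> = bind_pmf \<mu> (\<lambda>M. M \<pi>)"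

lemma expectation_mixing:
  "measure_pmf.expectation \<mu> h = (\<Sum>b\<in>decisions. h (hidden_arm_model b) * weight b)"
proof -
  have "measure_pmf.expectation \<mu> h = (\<Sum>M\<in>model_class. h M * pmf \<mu> M)"
    using mixing_support finite_model_class by (intro integral_measure_pmf_real) auto
  then show ?thesis
    unfolding model_class_def weight_def sum.reindex[OF inj_on_hidden_arm_model] by simp
qed

lemma sum_weight: "(\<Sum>b\<in>decisions. weight b) = 1"
  using expectation_mixing[of "\<lambda>_. 1"] by simp

lemma fval_mixture: "fval mixture \<pi> = (\<Sum>b\<in>decisions. fval (hidden_arm_model b) \<pi> * weight b)"
proof -
  have "fval mixture \<pi> = (\<Sum>M\<in>model_class. pmf \<mu> M *\<^sub>R fval M \<pi>)"
    unfolding fval_def mixture_def using mixing_support finite_model_class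
    by (intro pmf_expectation_bind) (auto simp: model_class_def hidden_arm_model_def)
  then show ?thesis
    unfolding model_class_def weight_def sum.reindex[OF inj_on_hidden_arm_model]
    by (simp add: mult.commute)
qed

lemma weight_nonneg: "0 \<le> weight b"
  by (simp add: weight_def)

lemma fval_mixture_reveal: "fval mixture 0 = 0"
  unfolding fval_mixture fval_hidden_arm_model by simp

lemma fval_mixture_arm:
  assumes "a \<in> decisions" "a \<noteq> 0"
  shows "fval mixture a = 1/2 + weight a / 2"
proof -
  have "fval mixture a = (\<Sum>b\<in>decisions. weight b / 2 + (if b = a then weight a / 2 else 0))"
    unfolding fval_mixture fval_hidden_arm_model using assms by (intro sum.cong) auto
  also have "\<dots> = 1/2 + weight a / 2"
    using assms by (simp add: sum.distrib sum_divide_distrib[symmetric] sum_weight)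
  finally show ?thesis .
qed

lemma gval_mixture_best_arm:
  assumes a: "a \<in> decisions" "a \<noteq> 0"
    and best: "\<And>b. b \<in> decisions \<Longrightarrow> b \<noteq> 0 \<Longrightarrow> weight b \<le> weight a"
  shows "gval decisions mixture a = 0" and "gval decisions mixture 0 \<le> 1"
proof -
  have "(SUP \<pi>\<in>decisions. fval mixture \<pi>) = fval mixture a"
  proof (rule cSup_eq_maximum)
    show "fval mixture a \<in> fval mixture ` decisions"
      using a by simp
    show "x \<le> fval mixture a" if x: "x \<in> fval mixture ` decisions" for x
    proof -
      obtain \<pi> where "\<pi> \<in> decisions" "x = fval mixture \<pi>"
        using x by blast
      then show ?thesis
        using a best[of \<pi>] weight_nonneg[of a]
        by (cases "\<pi> = 0") (simp_all add: fval_mixture_reveal fval_mixture_arm)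
    qed
  qed
  moreover have "weight a \<le> 1"
    by (simp add: weight_def pmf_le_1)
  ultimately show "gval decisions mixture a = 0" and "gval decisions mixture 0 \<le> 1"
    using a by (simp_all add: gval_def fval_mixture_reveal fval_mixture_arm)
qed

lemma weight_le_half:
  assumes "a \<in> decisions" "b \<in> decisions" "b \<noteq> a" "weight b \<le> weight a"
  shows "weight b \<le> 1/2"
proof -
  have "weight b + weight a = (\<Sum>x\<in>{b, a}. weight x)"
    using assms by simp
  also have "\<dots> \<le> (\<Sum>x\<in>decisions. weight x)"
    using assms weight_nonneg by (intro sum_mono2) auto
  finally show ?thesis
    using assms sum_weight by simp
qed

lemma pmf_mixture_reveal:
  assumes "b \<in> decisions" "b \<noteq> 0"
  shows "pmf (mixture 0) (0, b) = reveal_prob * weight b"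
  unfolding mixture_def pmf_bind expectation_mixing
  using assms by (simp add: pmf_hidden_arm_model_reveal if_distrib if_distribR cong: if_cong)

lemma set_pmf_mixture_reveal: "set_pmf (mixture 0) \<subseteq> {0} \<times> decisions"
proof
  fix z assume "z \<in> set_pmf (mixture 0)"
  then obtain b where "b \<in> decisions" "z \<in> set_pmf (hidden_arm_model b 0)"
    using mixing_support by (auto simp: mixture_def model_class_def)
  then show "z \<in> {0} \<times> decisions"
    by (auto simp: hidden_arm_model_def)
qed

lemma hellinger_sq_reveal_mixture_ge:
  assumes b: "b \<in> decisions" "b \<noteq> 0"
  shows "reveal_prob * (1 - sqrt (weight b))\<^sup>2 \<le> hellinger_sq (hidden_arm_model b 0) (mixture 0)"
proof -
  have "sqrt reveal_prob - sqrt (reveal_prob * weight b) = sqrt reveal_prob * (1 - sqrt (weight b))"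
    by (simp add: real_sqrt_mult algebra_simps)
  then have "reveal_prob * (1 - sqrt (weight b))\<^sup>2 = (sqrt reveal_prob - sqrt (reveal_prob * weight b))\<^sup>2"
    using reveal_prob_pos by (simp add: power_mult_distrib)
  also have "\<dots> = (sqrt (pmf (hidden_arm_model b 0) (0, b)) - sqrt (pmf (mixture 0) (0, b)))\<^sup>2"
    using b by (simp add: pmf_hidden_arm_model_reveal pmf_mixture_reveal)
  also have "\<dots> \<le> hellinger_sq (hidden_arm_model b 0) (mixture 0)"
    using set_pmf_mixture_reveal b
    by (intro hellinger_sq_ge_point[of "{0} \<times> decisions"]) (auto simp: hidden_arm_model_def)
  finally show ?thesis .
qed

lemma hellinger_sq_reveal_mixture_gt:
  assumes "b \<in> decisions" "b \<noteq> 0" "weight b \<le> 1/2"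
  shows "reveal_prob / 16 < hellinger_sq (hidden_arm_model b 0) (mixture 0)"
proof -
  have "sqrt (weight b) \<le> sqrt (1/2)"
    using assms(3) by simp
  also have "sqrt (1/2) < 3/4"
    by (rule real_less_lsqrt) (simp_all add: power2_eq_square)
  finally have "(1/4)\<^sup>2 < (1 - sqrt (weight b))\<^sup>2"
    by (intro power_strict_mono) auto
  then have "reveal_prob * (1/4)\<^sup>2 < reveal_prob * (1 - sqrt (weight b))\<^sup>2"
    using reveal_prob_pos by (intro mult_strict_left_mono)
  moreover have "reveal_prob * (1/4)\<^sup>2 = reveal_prob / 16"
    by (simp add: power2_eq_square)
  ultimately show ?thesis
    using hellinger_sq_reveal_mixture_ge[OF assms(1,2)] by linarith
qed

lemma exists_best_arm:
  obtains a where "a \<in> decisions" "a \<noteq> 0" "\<And>b. b \<in> decisions \<Longrightarrow> b \<noteq> 0 \<Longrightarrow> weight b \<le> weight a"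
proof -
  obtain a where "a \<in> {1..num_arms}" "weight a = Max (weight ` {1..num_arms})"
    using Max_in[of "weight ` {1..num_arms}"] num_arms_pos by fastforce
  then show thesis
    by (intro that) (auto simp: decisions_def)
qed

lemma other_arm_violates_constraint:
  assumes a: "a \<in> decisions" and best: "\<And>b. b \<in> decisions \<Longrightarrow> b \<noteq> 0 \<Longrightarrow> weight b \<le> weight a"
    and b: "b \<in> decisions" "b \<noteq> 0" "b \<noteq> a"
    and q: "q * reveal_prob = 16 * \<epsilon>^2" "0 < \<epsilon>"
  shows "\<epsilon>^2 < q * hellinger_sq (hidden_arm_model b 0) (mixture 0)"
proof -
  have "weight b \<le> 1/2"
    using weight_le_half[OF a b(1,3)] best[OF b(1,2)] .
  then have "reveal_prob / 16 < hellinger_sq (hidden_arm_model b 0) (mixture 0)"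
    using hellinger_sq_reveal_mixture_gt b by blast
  moreover have "0 < q"
    using zero_less_mult_pos2[of q reveal_prob] q reveal_prob_pos by simp
  ultimately have "q * (reveal_prob / 16) < q * hellinger_sq (hidden_arm_model b 0) (mixture 0)"
    by simp
  then show ?thesis
    using q(1) by simp
qed

lemma constrained_upper_bound:
  assumes "0 < \<epsilon>"
  shows "dec_c decisions (model_class \<union> {mixture}) mixture \<epsilon> \<le> 16 * \<epsilon>^2 * sqrt \<gamma>"
proof -
  define B where "B = 16 * \<epsilon>^2 * sqrt \<gamma>"
  obtain a where a: "a \<in> decisions" "a \<noteq> 0"
    and best: "\<And>b. b \<in> decisions \<Longrightarrow> b \<noteq> 0 \<Longrightarrow> weight b \<le> weight a"
    using exists_best_arm by blast
  define q where "q = min B 1"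
  define p where "p = map_pmf (\<lambda>revealed. if revealed then 0 else a) (bernoulli_pmf q)"
  have q: "0 \<le> q" "q \<le> 1" "q \<le> B"
    using gamma_ge_1 by (auto simp: q_def B_def)
  have expectation_p: "measure_pmf.expectation p F = q * F 0 + (1 - q) * F a" for F :: "nat \<Rightarrow> real"
    unfolding p_def using q by simp
  have p_dist: "p \<in> dists_on decisions"
    using a by (auto simp: p_def dists_on_def)
  have "dec_c decisions (model_class \<union> {mixture}) mixture \<epsilon> \<le> B"
  proof (rule dec_c_le[OF finite_decisions _ p_dist])
    show "finite (model_class \<union> {mixture})"
      using finite_model_class by simp
    show "0 \<le> B"
      using q by linarith
    fix M assume M: "M \<in> model_class \<union> {mixture}"
      and close: "measure_pmf.expectation p (\<lambda>\<pi>. hellinger_sq (M \<pi>) (mixture \<pi>)) \<le> \<epsilon>^2"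
    consider "gval decisions M a = 0" "gval decisions M 0 \<le> 1"
      | b where "b \<in> decisions" "b \<noteq> 0" "b \<noteq> a" "M = hidden_arm_model b"
      using M a gval_mixture_best_arm[OF a best]
      by (fastforce simp: model_class_def gval_hidden_arm_model)
    then show "measure_pmf.expectation p (gval decisions M) \<le> B"
    proof cases
      case 1
      then show ?thesis
        unfolding expectation_p using mult_left_le[OF 1(2) q(1)] q(3) by simp
    next
      case (2 b)
      have "0 \<le> (1 - q) * hellinger_sq (M a) (mixture a)"
        using q(2) by (simp add: hellinger_sq_nonneg)
      then have within: "q * hellinger_sq (hidden_arm_model b 0) (mixture 0) \<le> \<epsilon>^2"
        using close 2(4) unfolding expectation_p by simp
      have "q = 1"
      proof (rule ccontr)
        assume "q \<noteq> 1"
        then have "q * reveal_prob = 16 * \<epsilon>^2"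
          using gamma_ge_1 by (simp add: q_def B_def reveal_prob_def min_def split: if_splits)
        then have "\<epsilon>^2 < q * hellinger_sq (hidden_arm_model b 0) (mixture 0)"
          using other_arm_violates_constraint[OF a(1) best 2(1-3)] assms by blast
        with within show False
          by linarith
      qed
      then show ?thesis
        using 2 q unfolding expectation_p by (simp add: gval_hidden_arm_model)
    qed
  qed
  then show ?thesis
    by (simp add: B_def)
qed

end

context hidden_arm_instance
begin

lemma dec_c_glob_bound:
  assumes "0 < \<epsilon>"
  shows "dec_c_glob decisions model_class \<epsilon> \<le> 16 * \<epsilon>^2 * sqrt \<gamma>"
proof (rule dec_c_glob_le)
  show "model_class \<noteq> {}"
    by (simp add: model_class_def decisions_nonempty)
  fix \<mu> assume "set_pmf \<mu> \<subseteq> model_class"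
  then interpret hidden_arm_mixture \<gamma> \<mu>
    by unfold_locales
  have "(\<lambda>\<pi>. bind_pmf \<mu> (\<lambda>M. M \<pi>)) = mixture"
    by (simp add: mixture_def fun_eq_iff)
  then show "dec_c decisions (model_class \<union> {\<lambda>\<pi>. bind_pmf \<mu> (\<lambda>M. M \<pi>)}) (\<lambda>\<pi>. bind_pmf \<mu> (\<lambda>M. M \<pi>)) \<epsilon>
      \<le> 16 * \<epsilon>^2 * sqrt \<gamma>"
    using constrained_upper_bound[OF assms] by simp
qed

lemma dec_o_bound: "1 / (32 * sqrt \<gamma>) \<le> dec_o decisions model_class (hidden_arm_model 0) \<gamma>"
proof (rule dec_o_ge[OF finite_model_class])
  show "dists_on decisions \<noteq> {}"
    by (auto simp: dists_on_def intro!: exI[of _ "return_pmf 0"])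
qed (auto simp: dists_on_def intro: offset_lower_bound)

lemma dec_c_small_dec_o_large:
  "decisions \<noteq> {} \<and> model_class \<subseteq> models_all decisions \<and>
   (\<forall>\<epsilon>. 0 < \<epsilon> \<and> \<epsilon> < 1 \<longrightarrow> dec_c_glob decisions model_class \<epsilon> \<le> 16 * \<epsilon>^2 * sqrt \<gamma>) \<and>
   (\<exists>Mbar\<in>model_class. (1/32) / sqrt \<gamma> \<le> dec_o decisions model_class Mbar \<gamma>)"
proof -
  have "hidden_arm_model 0 \<in> model_class"
    by (simp add: model_class_def)
  then show ?thesis
    using decisions_nonempty model_class_subset dec_c_glob_bound dec_o_bound by auto
qed

end

theorem proposition4p4:
  shows "\<exists>c1 c2 :: real. c1 > 0 \<and> c2 > 0 \<and>
    (\<forall>\<gamma> :: real. \<gamma> \<ge> 1 \<longrightarrow>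
      (\<exists>(Dec :: nat set) (MM :: model set). Dec \<noteq> {} \<and> MM \<subseteq> models_all Dec \<and>
         (\<forall>\<epsilon> :: real. 0 < \<epsilon> \<and> \<epsilon> < 1 \<longrightarrow> dec_c_glob Dec MM \<epsilon> \<le> c1 * \<epsilon>^2 * sqrt \<gamma>) \<and>
         (\<exists>Mbar\<in>MM. dec_o Dec MM Mbar \<gamma> \<ge> c2 / sqrt \<gamma>)))"
proof (rule exI[of _ 16], rule exI[of _ "1/32"], intro conjI allI impI)
  fix \<gamma> :: real
  assume "\<gamma> \<ge> 1"
  then interpret hidden_arm_instance \<gamma>
    by unfold_locales
  from dec_c_small_dec_o_large show "\<exists>Dec MM. Dec \<noteq> {} \<and> MM \<subseteq> models_all Dec \<and>
      (\<forall>\<epsilon>. 0 < \<epsilon> \<and> \<epsilon> < 1 \<longrightarrow> dec_c_glob Dec MM \<epsilon> \<le> 16 * \<epsilon>^2 * sqrt \<gamma>) \<and>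
      (\<exists>Mbar\<in>MM. dec_o Dec MM Mbar \<gamma> \<ge> (1/32) / sqrt \<gamma>)"
    by blast
qed simp_all

end
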